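(* Let $F_1,\dots,F_n:\mathbb{R}^d\to\mathbb{R}^d$, $F=\frac1n\sum_iF_i$, $F(x^* )=0$; assume $F$ is $L$-Lipschitz and $\mu$-quasi strongly monotone, and that the Expected Residual condition holds with parameter $\delta>0$ for $g=F_v$, $v\sim\mathcal D$; let $\sigma_*^2=\mathbb{E}\|F_v(x^* )\|^2<\infty$. Let $\bar\omega:=\min\{\frac1{4L},\frac{\mu}{18\delta}\}$, $k^*:=\lceil\frac{4}{\mu\bar\omega}\rceil$, and $$\gamma_k=\omega_k:=\begin{cases}\bar\omega,&k\le k^*,\\ \frac{2k+1}{(k+1)^2}\cdot\frac2\mu,&k>k^*.\end{cases}$$ Then for all $K\ge k^*$, the iterates of SPEG with these step-sizes satisfy $$R_K^2\le\Big(\frac{k^*}{K}\Big)^2\frac{R_0^2}{\exp(2)}+\frac{192\sigma_*^2}{\mu^2K},$$ where $R_K^2:=\mathbb{E}\big[\|x_K-x^*\|^2+\|x_K-\hat x_{K-1}\|^2\big]$.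
   Context: $L$-Lipschitz: $\|F(x)-F(y)\|\le L\|x-y\|$. $\mu$-quasi strongly monotone ($\mu>0$): $\langle F(x),x-x^*\rangle\ge\mu\|x-x^*\|^2$ for all $x$. A sampling distribution $\mathcal D$ is a distribution of a random $v\in\mathbb{R}^n_+$ with $\mathbb{E}[v_i]=1$ for all $i$; $F_v(x):=\frac1n\sum_iv_iF_i(x)$. Expected Residual with parameter $\delta$: $\mathbb{E}\|(F_v(x)-F_v(x^* ))-(F(x)-F(x^* ))\|^2\le\frac\delta2\|x-x^*\|^2$ for all $x$. SPEG: given $x_0$, $\hat x_{-1}=x_0$, and for $k\ge0$: $\hat x_k=x_k-\gamma_kF_{v_{k-1}}(\hat x_{k-1})$, $x_{k+1}=x_k-\omega_kF_{v_k}(\hat x_k)$, with $v_{-1},v_0,\dots$ i.i.d. from $\mathcal D$. *)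

theory Defs
  imports "HOL-Analysis.Analysis" "HOL-Probability.Probability"
begin

text \<open>Operators F_1..F_n are indexed by a finite type 'i (n = CARD('i)); sample vectors
  v are elements of real^'i; points live in an arbitrary Euclidean space 'a (= R^d).\<close>

definition Fmean :: "('i::finite \<Rightarrow> 'a::euclidean_space \<Rightarrow> 'a) \<Rightarrow> 'a \<Rightarrow> 'a" where
  "Fmean Fs x = (1 / real CARD('i)) *\<^sub>R (\<Sum>i\<in>UNIV. Fs i x)"

definition Fv :: "('i::finite \<Rightarrow> 'a::euclidean_space \<Rightarrow> 'a) \<Rightarrow> real^'i \<Rightarrow> 'a \<Rightarrow> 'a" where
  "Fv Fs v x = (1 / real CARD('i)) *\<^sub>R (\<Sum>i\<in>UNIV. (v $ i) *\<^sub>R Fs i x)"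

definition quasi_strongly_monotone :: "real \<Rightarrow> ('a::real_inner \<Rightarrow> 'a) \<Rightarrow> 'a \<Rightarrow> bool" where
  "quasi_strongly_monotone \<mu> F xs \<longleftrightarrow> (\<forall>x. inner (F x) (x - xs) \<ge> \<mu> * (norm (x - xs))\<^sup>2)"

definition sampling_distribution :: "(real^'i::finite) measure \<Rightarrow> bool" where
  "sampling_distribution D \<longleftrightarrow> prob_space D \<and> sets D = sets borel \<and>
     (AE v in D. \<forall>i. v $ i \<ge> 0) \<and>
     (\<forall>i. integrable D (\<lambda>v. v $ i) \<and> (\<integral>v. v $ i \<partial>D) = 1)"

text \<open>Expected residual with parameter delta (expectation as a nonnegative integral, so
  the condition also asserts finiteness).\<close>
definition expected_residual ::
  "real \<Rightarrow> (real^'i::finite) measure \<Rightarrow> ('i \<Rightarrow> 'a::euclidean_space \<Rightarrow> 'a) \<Rightarrow> 'a \<Rightarrow> bool" where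
  "expected_residual \<delta> D Fs xs \<longleftrightarrow> (\<forall>x.
     (\<integral>\<^sup>+ v. ennreal ((norm ((Fv Fs v x - Fv Fs v xs) - (Fmean Fs x - Fmean Fs xs)))\<^sup>2) \<partial>D)
       \<le> ennreal (\<delta> / 2 * (norm (x - xs))\<^sup>2))"

text \<open>SPEG driven by a sample sequence s, where s 0 = v_{-1} and s (Suc k) = v_k.
  speg_state ... k = (x_k, xhat_{k-1}), with xhat_{-1} = x_0.\<close>
fun speg_state ::
  "('i::finite \<Rightarrow> 'a::euclidean_space \<Rightarrow> 'a) \<Rightarrow> (nat \<Rightarrow> real) \<Rightarrow> (nat \<Rightarrow> real) \<Rightarrow> 'a
    \<Rightarrow> (nat \<Rightarrow> real^'i) \<Rightarrow> nat \<Rightarrow> 'a \<times> 'a" where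
  "speg_state Fs \<gamma> \<omega> x0 s 0 = (x0, x0)"
| "speg_state Fs \<gamma> \<omega> x0 s (Suc k) =
     (let (xk, xh_prev) = speg_state Fs \<gamma> \<omega> x0 s k;
          xh = xk - \<gamma> k *\<^sub>R Fv Fs (s k) xh_prev
      in (xk - \<omega> k *\<^sub>R Fv Fs (s (Suc k)) xh, xh))"

definition speg_R2 ::
  "(real^'i::finite) measure \<Rightarrow> ('i \<Rightarrow> 'a::euclidean_space \<Rightarrow> 'a) \<Rightarrow> (nat \<Rightarrow> real) \<Rightarrow> (nat \<Rightarrow> real)
    \<Rightarrow> 'a \<Rightarrow> 'a \<Rightarrow> nat \<Rightarrow> ennreal" where
  "speg_R2 D Fs \<gamma> \<omega> x0 xs K =
     (\<integral>\<^sup>+ s. ennreal ((norm (fst (speg_state Fs \<gamma> \<omega> x0 s K) - xs))\<^sup>2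
                     + (norm (fst (speg_state Fs \<gamma> \<omega> x0 s K) - snd (speg_state Fs \<gamma> \<omega> x0 s K)))\<^sup>2)
       \<partial>(PiM (UNIV :: nat set) (\<lambda>_. D)))"

end

theory Submission
  imports Defs
begin

(*
  Write x_k, xhat_(k-1) for the SPEG iterates and Phi_k = |x_k - x*|^2 + |x_k - xhat_(k-1)|^2,
  so that R_k^2 = E Phi_k.  Averaging over the fresh sample v_k alone, unbiasedness of F_v,
  quasi-strong monotonicity, the Lipschitz bound and the expected residual condition give
    E_(v_k) Phi_(k+1) <= (1 - 17/18 w mu) |x_k - x*|^2 + 1/2 |x_k - xhat_(k-1)|^2
                        + 4 w^2 |F_(v_(k-1)) (xhat_(k-1)) - F (xhat_(k-1))|^2 + 4 w^2 sigma^2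
  for a step w = omega_k <= wbar.  Since xhat_(k-1) does not depend on v_(k-1), averaging over
  v_(k-1) bounds the third term by the expected residual once more, and altogether
  R_(k+1)^2 <= (1 - w mu/2) R_k^2 + 12 w^2 sigma^2.  During the first k* steps (w = wbar) this
  recursion contracts by (1 - wbar mu/2)^k* <= exp (-2) down to the noise floor 24 wbar sigma^2/mu;
  for the decreasing steps (k+1)^2 (1 - omega_k mu/2) = k^2, so k^2 R_k^2 grows by at most
  192 sigma^2/mu^2 per step.
*)

section \<open>Nonnegative integrals over product measures\<close>

lemma nn_integral_PiM_resample:
  assumes M: "\<And>i. i \<in> I \<Longrightarrow> prob_space (M i)" and j: "j \<in> I"
    and f[measurable]: "f \<in> borel_measurable (PiM I M)"
  shows "(\<integral>\<^sup>+ s. f s \<partial>PiM I M) = (\<integral>\<^sup>+ s. \<integral>\<^sup>+ x. f (s(j := x)) \<partial>M j \<partial>PiM I M)"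
proof -
  define J where "J = I - {j}"
  have I: "insert j J = I" using j by (auto simp: J_def)
  interpret Mj: prob_space "M j" using M j .
  interpret PJ: prob_space "PiM J M" using M by (intro prob_space_PiM) (auto simp: J_def)
  interpret pair_sigma_finite "M j" "PiM J M" ..
  have "(\<lambda>z. (snd z)(j := fst z)) \<in> measurable (M j \<Otimes>\<^sub>M PiM J M) (PiM I M)"
    by (rule measurable_fun_upd[where J=J]) (use I in auto)
  then have [measurable]: "(\<lambda>(x, X). X(j := x)) \<in> measurable (M j \<Otimes>\<^sub>M PiM J M) (PiM I M)"
    by (simp add: case_prod_beta')
  have inner[measurable]: "(\<lambda>X. \<integral>\<^sup>+ x. f (X(j := x)) \<partial>M j) \<in> borel_measurable (PiM J M)"
    by measurable
  have "(\<integral>\<^sup>+ s. f s \<partial>PiM I M)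
      = (\<integral>\<^sup>+ s. f s \<partial>distr (M j \<Otimes>\<^sub>M PiM J M) (PiM I M) (\<lambda>(x, X). X(j := x)))"
    using distr_pair_PiM_eq_PiM[of J M j] M[OF j] M unfolding I by (simp add: J_def)
  also have "\<dots> = (\<integral>\<^sup>+ X. \<integral>\<^sup>+ x. f (X(j := x)) \<partial>M j \<partial>PiM J M)"
    by (simp add: nn_integral_distr nn_integral_snd[symmetric] case_prod_beta)
  also have "\<dots> = (\<integral>\<^sup>+ X. \<integral>\<^sup>+ x. f (X(j := x)) \<partial>M j \<partial>distr (PiM I M) (PiM J M) (\<lambda>s. restrict s J))"
    using distr_PiM_reindex[of I M id J] M by (simp add: J_def)
  also have "\<dots> = (\<integral>\<^sup>+ s. \<integral>\<^sup>+ x. f ((restrict s J)(j := x)) \<partial>M j \<partial>PiM I M)"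
    by (rule nn_integral_distr[OF measurable_restrict_subset]) (use inner in \<open>auto simp: J_def\<close>)
  also have "\<dots> = (\<integral>\<^sup>+ s. \<integral>\<^sup>+ x. f (s(j := x)) \<partial>M j \<partial>PiM I M)"
    by (intro nn_integral_cong arg_cong[where f=f])
       (auto simp: space_PiM PiE_iff extensional_def J_def fun_eq_iff)
  finally show ?thesis .
qed

lemma nn_integral_ennreal_add_cmult:
  assumes [measurable]: "f \<in> borel_measurable M" "g \<in> borel_measurable M"
    and "\<And>x. 0 \<le> f x" "\<And>x. 0 \<le> g x" "0 \<le> c"
  shows "(\<integral>\<^sup>+ x. ennreal (f x + c * g x) \<partial>M)
       = (\<integral>\<^sup>+ x. ennreal (f x) \<partial>M) + ennreal c * (\<integral>\<^sup>+ x. ennreal (g x) \<partial>M)"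
proof -
  have "(\<integral>\<^sup>+ x. ennreal (f x + c * g x) \<partial>M) = (\<integral>\<^sup>+ x. ennreal (f x) + ennreal c * ennreal (g x) \<partial>M)"
    using assms by (intro nn_integral_cong) (simp add: ennreal_mult)
  also have "\<dots> = (\<integral>\<^sup>+ x. ennreal (f x) \<partial>M) + ennreal c * (\<integral>\<^sup>+ x. ennreal (g x) \<partial>M)"
    by (simp add: nn_integral_add nn_integral_cmult)
  finally show ?thesis .
qed

lemma power2_norm_add_le:
  fixes a b :: "'a::real_normed_vector"
  shows "(norm (a + b))\<^sup>2 \<le> 2 * (norm a)\<^sup>2 + 2 * (norm b)\<^sup>2"
proof -
  have "(norm (a + b))\<^sup>2 \<le> (norm a + norm b)\<^sup>2"
    by (simp add: norm_triangle_ineq power_mono)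
  also have "\<dots> \<le> 2 * (norm a)\<^sup>2 + 2 * (norm b)\<^sup>2"
    using sum_squares_ge_zero[of "norm a - norm b" 0] by (simp add: power2_eq_square algebra_simps)
  finally show ?thesis .
qed

(* f + e is the sampled operator at the extrapolated point x - w p, split into mean f and noise e. *)
lemma extragradient_sq_norm_expand:
  fixes x xs p f e :: "'a::real_inner" and w :: real
  shows "(norm (x - w *\<^sub>R (f + e) - xs))\<^sup>2 + (norm (x - w *\<^sub>R (f + e) - (x - w *\<^sub>R p)))\<^sup>2
     = ((norm (x - xs))\<^sup>2 - 2 * w * inner f (x - w *\<^sub>R p - xs) + 2 * w\<^sup>2 * (norm (f - p))\<^sup>2 - w\<^sup>2 * (norm p)\<^sup>2)
       - 2 * w * inner e (x - w *\<^sub>R p - xs) + 4 * w\<^sup>2 * inner e (f - p) + 2 * w\<^sup>2 * (norm e)\<^sup>2"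
  unfolding power2_norm_eq_inner
  by (simp add: inner_diff_left inner_diff_right inner_add_left inner_add_right
      inner_commute power2_eq_square algebra_simps)

lemma extrapolation_sq_dist:
  fixes x xs p :: "'a::real_normed_vector" and q w :: real
  assumes q: "0 \<le> q" "q \<le> 1/4"
  shows "q * (norm (x - xs))\<^sup>2 \<le> 2 * (q * (norm (x - w *\<^sub>R p - xs))\<^sup>2) + w\<^sup>2 * (norm p)\<^sup>2 / 2"
proof -
  have "(norm (x - xs))\<^sup>2 \<le> 2 * (norm (x - w *\<^sub>R p - xs))\<^sup>2 + 2 * (w\<^sup>2 * (norm p)\<^sup>2)"
    using power2_norm_add_le[of "x - w *\<^sub>R p - xs" "w *\<^sub>R p"] by (simp add: power_mult_distrib)
  then have "q * (norm (x - xs))\<^sup>2 \<le> 2 * (q * (norm (x - w *\<^sub>R p - xs))\<^sup>2) + 2 * (q * (w\<^sup>2 * (norm p)\<^sup>2))"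
    using mult_left_mono[OF _ q(1)] by (fastforce simp: algebra_simps)
  moreover have "q * (w\<^sup>2 * (norm p)\<^sup>2) \<le> 1/4 * (w\<^sup>2 * (norm p)\<^sup>2)"
    using q(2) by (rule mult_right_mono) simp
  ultimately show ?thesis by linarith
qed

lemma lyapunov_recombination:
  fixes a b w \<mu> \<delta> \<sigma> :: real
  assumes "0 \<le> a" "0 \<le> b" "0 \<le> w" "18 * \<delta> * w \<le> \<mu>" "w * \<mu> \<le> 1/4"
  shows "(1 - 17/18 * w * \<mu>) * a + b / 2 + 4 * w\<^sup>2 * \<sigma> + 4 * w\<^sup>2 * (\<delta> * (2 * a + 2 * b) + 2 * \<sigma>)
    \<le> (1 - w * \<mu> / 2) * (a + b) + 12 * w\<^sup>2 * \<sigma>"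
proof -
  have "18 * (w\<^sup>2 * \<delta>) \<le> w * \<mu>"
    using mult_left_mono[OF assms(4,3)] by (simp add: power2_eq_square algebra_simps)
  then have "18 * (w\<^sup>2 * \<delta>) * (a + b) \<le> w * \<mu> * (a + b)"
    using assms(1,2) by (intro mult_right_mono) auto
  then have residual: "18 * (w\<^sup>2 * \<delta> * (a + b)) \<le> w * \<mu> * a + w * \<mu> * b"
    by (simp add: algebra_simps)
  have small_b: "w * \<mu> * b \<le> 1/4 * b"
    using assms(5,2) by (rule mult_right_mono)
  have "(1 - 17/18 * w * \<mu>) * a + b / 2 + 4 * w\<^sup>2 * \<sigma> + 4 * w\<^sup>2 * (\<delta> * (2 * a + 2 * b) + 2 * \<sigma>)
      = a - 17/18 * (w * \<mu> * a) + b / 2 + 8 * (w\<^sup>2 * \<delta> * (a + b)) + 12 * (w\<^sup>2 * \<sigma>)"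
    by (simp add: algebra_simps)
  moreover have "(1 - w * \<mu> / 2) * (a + b) + 12 * w\<^sup>2 * \<sigma>
      = a + b - (w * \<mu> * a) / 2 - (w * \<mu> * b) / 2 + 12 * (w\<^sup>2 * \<sigma>)"
    by (simp add: algebra_simps)
  ultimately show ?thesis
    using residual small_b assms(2) by linarith
qed

section \<open>Affine recurrences and the step-size schedule\<close>

fun affine_rec :: "(nat \<Rightarrow> real) \<Rightarrow> (nat \<Rightarrow> real) \<Rightarrow> real \<Rightarrow> nat \<Rightarrow> real" where
  "affine_rec q c r0 0 = r0"
| "affine_rec q c r0 (Suc k) = q k * affine_rec q c r0 k + c k"

lemma affine_rec_nonneg:
  "0 \<le> r0 \<Longrightarrow> (\<And>k. 0 \<le> q k) \<Longrightarrow> (\<And>k. 0 \<le> c k) \<Longrightarrow> 0 \<le> affine_rec q c r0 k"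
  by (induction k) simp_all

lemma le_affine_rec:
  fixes R :: "nat \<Rightarrow> ennreal"
  assumes R0: "R 0 \<le> ennreal r0" and R: "\<And>k. R (Suc k) \<le> ennreal (q k) * R k + ennreal (c k)"
    and nonneg: "0 \<le> r0" "\<And>k. 0 \<le> q k" "\<And>k. 0 \<le> c k"
  shows "R k \<le> ennreal (affine_rec q c r0 k)"
proof (induction k)
  case (Suc k)
  have "R (Suc k) \<le> ennreal (q k) * ennreal (affine_rec q c r0 k) + ennreal (c k)"
    using R[of k] Suc.IH by (meson add_right_mono mult_left_mono order_trans zero_le)
  also have "\<dots> = ennreal (affine_rec q c r0 (Suc k))"
    using affine_rec_nonneg[OF nonneg] nonneg by (simp add: ennreal_mult ennreal_plus)
  finally show ?case .
qed (simp add: R0)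

lemma affine_rec_const_le:
  assumes "\<And>j. j < k \<Longrightarrow> q j = a" "\<And>j. j < k \<Longrightarrow> c j = b" and "0 \<le> a" "a < 1" "0 \<le> b"
  shows "affine_rec q c r0 k \<le> a ^ k * r0 + b / (1 - a)"
  using assms(1,2)
proof (induction k)
  case (Suc k)
  then have "affine_rec q c r0 (Suc k) \<le> a * (a ^ k * r0 + b / (1 - a)) + b"
    using \<open>0 \<le> a\<close> by (simp add: mult_left_mono)
  also have "\<dots> = a ^ Suc k * r0 + b / (1 - a)"
    using \<open>a < 1\<close> by (simp add: field_simps)
  finally show ?case .
qed (use assms(4,5) in simp)

lemma affine_rec_tail:
  assumes q: "\<And>j. k0 \<le> j \<Longrightarrow> (real j + 1)\<^sup>2 * q j = (real j)\<^sup>2"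
    and c: "\<And>j. k0 \<le> j \<Longrightarrow> (real j + 1)\<^sup>2 * c j \<le> C"
  shows "(real (k0 + m))\<^sup>2 * affine_rec q c r0 (k0 + m) \<le> (real k0)\<^sup>2 * affine_rec q c r0 k0 + real m * C"
  using assms
proof (induction m)
  case (Suc m)
  let ?j = "k0 + m"
  have "(real (k0 + Suc m))\<^sup>2 * affine_rec q c r0 (k0 + Suc m)
      = (real ?j + 1)\<^sup>2 * q ?j * affine_rec q c r0 ?j + (real ?j + 1)\<^sup>2 * c ?j"
    by (simp add: algebra_simps)
  also have "\<dots> \<le> (real ?j)\<^sup>2 * affine_rec q c r0 ?j + C"
    using Suc.prems[of ?j] by simp
  also have "\<dots> \<le> (real k0)\<^sup>2 * affine_rec q c r0 k0 + real (Suc m) * C"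
    using Suc by (simp add: algebra_simps)
  finally show ?case .
qed simp

lemma affine_rec_warmup:
  assumes q: "\<And>j. j \<le> k0 \<Longrightarrow> q j = 1 - t" and c: "\<And>j. j \<le> k0 \<Longrightarrow> c j = b"
    and t: "0 < t" "t \<le> 1" "2 \<le> t * real k0" and b: "0 \<le> b" and r0: "0 \<le> r0"
    and k: "k0 \<le> k" "k \<le> Suc k0"
  shows "(real k)\<^sup>2 * affine_rec q c r0 k \<le> (real k0)\<^sup>2 * exp (- 2) * r0 + (real k)\<^sup>2 * (b / t)"
proof -
  have "affine_rec q c r0 k \<le> (1 - t) ^ k * r0 + b / (1 - (1 - t))"
    using k t b by (intro affine_rec_const_le) (auto intro: q c)
  then have "(real k)\<^sup>2 * affine_rec q c r0 k \<le> (real k)\<^sup>2 * ((1 - t) ^ k * r0 + b / t)"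
    by (simp add: mult_left_mono)
  then have rec: "(real k)\<^sup>2 * affine_rec q c r0 k \<le> ((real k)\<^sup>2 * (1 - t) ^ k) * r0 + (real k)\<^sup>2 * (b / t)"
    by (simp add: algebra_simps)
  have "(1 - t) ^ k0 \<le> exp (- t) ^ k0"
    using t exp_minus_ge[of t] by (intro power_mono) auto
  also have "\<dots> \<le> exp (- 2)"
    using t by (simp add: mult.commute flip: exp_of_nat_mult)
  finally have decay: "(1 - t) ^ k0 \<le> exp (- 2)" .
  have "(real k)\<^sup>2 * (1 - t) ^ k \<le> (real k0)\<^sup>2 * (1 - t) ^ k0"
  proof (cases "k = k0")
    case False
    then have k_Suc: "k = Suc k0" using k by simp
    have "2 * real k0 + 1 \<le> t * real k0 * (real k0 + 1) + t * (real k0 + 1)"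
      using t mult_right_mono[OF t(3), of "real k0 + 1"] by (simp add: algebra_simps)
    then have "(real k0 + 1)\<^sup>2 * (1 - t) \<le> (real k0)\<^sup>2"
      by (simp add: power2_eq_square algebra_simps)
    then have "(real k0 + 1)\<^sup>2 * (1 - t) * (1 - t) ^ k0 \<le> (real k0)\<^sup>2 * (1 - t) ^ k0"
      using t by (intro mult_right_mono) auto
    then show ?thesis
      by (simp add: k_Suc mult.assoc add.commute)
  qed simp
  also have "\<dots> \<le> (real k0)\<^sup>2 * exp (- 2)"
    using decay by (simp add: mult_left_mono)
  finally show ?thesis
    using rec r0 by (meson add_right_mono mult_right_mono order_trans)
qed

lemma decreasing_step_contraction:
  fixes \<mu> :: real assumes "0 < \<mu>"
  shows "(real j + 1)\<^sup>2 * (1 - (2 * real j + 1) / (real j + 1)\<^sup>2 * (2 / \<mu>) * \<mu> / 2) = (real j)\<^sup>2"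
proof -
  define X where "X = (real j + 1)\<^sup>2"
  have "X \<noteq> 0" by (simp add: X_def)
  then have "X * (1 - (2 * real j + 1) / X * (2 / \<mu>) * \<mu> / 2) = X - (2 * real j + 1)"
    using assms by (simp add: field_simps)
  also have "\<dots> = (real j)\<^sup>2"
    by (simp add: X_def power2_eq_square algebra_simps)
  finally show ?thesis unfolding X_def .
qed

lemma decreasing_step_noise:
  fixes \<mu> \<sigma> :: real assumes "0 < \<mu>" "0 \<le> \<sigma>"
  shows "(real j + 1)\<^sup>2 * (12 * ((2 * real j + 1) / (real j + 1)\<^sup>2 * (2 / \<mu>))\<^sup>2 * \<sigma>) \<le> 192 * \<sigma> / \<mu>\<^sup>2"
proof -
  define X where "X = (real j + 1)\<^sup>2"
  define A where "A = 2 * real j + 1"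
  have X: "0 < X" by (simp add: X_def)
  have "A\<^sup>2 \<le> 4 * X"
    by (simp add: A_def X_def power2_eq_square algebra_simps)
  then have ratio: "A\<^sup>2 / X \<le> 4"
    using X by (simp add: divide_le_eq)
  have "X * (12 * (A / X * (2 / \<mu>))\<^sup>2 * \<sigma>) = 48 * \<sigma> / \<mu>\<^sup>2 * (A\<^sup>2 / X)"
    using X assms by (simp add: power_divide power_mult_distrib field_simps power2_eq_square)
  also have "\<dots> \<le> 48 * \<sigma> / \<mu>\<^sup>2 * 4"
    using ratio assms by (intro mult_left_mono) auto
  finally show ?thesis unfolding X_def A_def by simp
qed

lemma decreasing_step_le:
  fixes \<mu> w :: real
  assumes "0 < \<mu>" "0 < w" "4 / (\<mu> * w) \<le> real j"
  shows "(2 * real j + 1) / (real j + 1)\<^sup>2 * (2 / \<mu>) \<le> w"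
proof -
  define x where "x = real j + 1"
  have x: "0 < x" by (simp add: x_def)
  have "4 \<le> real j * (\<mu> * w)"
    using assms by (simp add: field_simps)
  moreover have "x * (\<mu> * w) = real j * (\<mu> * w) + \<mu> * w"
    by (simp add: x_def algebra_simps)
  ultimately have "4 \<le> x * (\<mu> * w)"
    using mult_pos_pos[OF assms(1,2)] by linarith
  then have "(2 * x - 1) / x\<^sup>2 * (2 / \<mu>) \<le> 2 / x * (2 / \<mu>)"
    using x assms by (intro mult_right_mono) (simp_all add: field_simps power2_eq_square)
  also have "\<dots> \<le> w"
    using \<open>4 \<le> x * (\<mu> * w)\<close> x assms by (simp add: field_simps)
  finally show ?thesis by (simp add: x_def add.commute)
qed

lemma schedule_step_bounds:
  fixes w \<mu> :: real
  assumes mu: "0 < \<mu>" and w: "0 < w"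
  defines "kstar \<equiv> nat \<lceil>4 / (\<mu> * w)\<rceil>"
  defines "step \<equiv> (\<lambda>k::nat. if k \<le> kstar then w else (2 * real k + 1) / (real k + 1)\<^sup>2 * (2 / \<mu>))"
  shows "0 \<le> step k" "step k \<le> w"
proof -
  have "4 / (\<mu> * w) \<le> real kstar"
    unfolding kstar_def by linarith
  then show "0 \<le> step k" "step k \<le> w"
    using decreasing_step_le[OF mu w, of k] mu w by (auto simp: step_def)
qed

lemma warmup_length:
  fixes w \<mu> :: real
  assumes mu: "0 < \<mu>" and w: "0 < w" "w * \<mu> \<le> 1/4"
  defines "kstar \<equiv> nat \<lceil>4 / (\<mu> * w)\<rceil>"
  shows "0 < kstar" and "2 \<le> w * \<mu> / 2 * real kstar" and "w * (real kstar + 1) \<le> 8 / \<mu>"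
proof -
  have "0 < 4 / (\<mu> * w)"
    using mu w by simp
  then have kstar: "4 / (\<mu> * w) \<le> real kstar" "real kstar < 4 / (\<mu> * w) + 1"
    unfolding kstar_def by linarith+
  then have "0 < real kstar"
    using \<open>0 < 4 / (\<mu> * w)\<close> by linarith
  then show "0 < kstar"
    by simp
  have "w * \<mu> / 2 * (4 / (\<mu> * w)) = 2"
    using mu w by (simp add: field_simps)
  then show "2 \<le> w * \<mu> / 2 * real kstar"
    using mult_left_mono[OF kstar(1), of "w * \<mu> / 2"] mu w by simp
  have "w * (real kstar + 1) \<le> w * (4 / (\<mu> * w) + 2)"
    using kstar(2) w by simp
  also have "\<dots> \<le> 8 / \<mu>"
    using w mu by (simp add: field_simps)
  finally show "w * (real kstar + 1) \<le> 8 / \<mu>" .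
qed

lemma affine_rec_schedule_sq_bound:
  fixes w \<mu> \<sigma> r0 :: real
  assumes mu: "0 < \<mu>" and w: "0 < w" "w * \<mu> \<le> 1/4" and \<sigma>: "0 \<le> \<sigma>" and r0: "0 \<le> r0"
  defines "kstar \<equiv> nat \<lceil>4 / (\<mu> * w)\<rceil>"
  defines "step \<equiv> (\<lambda>k::nat. if k \<le> kstar then w else (2 * real k + 1) / (real k + 1)\<^sup>2 * (2 / \<mu>))"
  assumes K: "kstar \<le> K"
  shows "(real K)\<^sup>2 * affine_rec (\<lambda>k. 1 - step k * \<mu> / 2) (\<lambda>k. 12 * (step k)\<^sup>2 * \<sigma>) r0 K
           \<le> (real kstar)\<^sup>2 * exp (- 2) * r0 + 192 * real K * \<sigma> / \<mu>\<^sup>2"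
proof -
  let ?r = "affine_rec (\<lambda>k. 1 - step k * \<mu> / 2) (\<lambda>k. 12 * (step k)\<^sup>2 * \<sigma>) r0"
  note kstar = warmup_length[OF mu w, folded kstar_def]
  have warmup: "(real k)\<^sup>2 * ?r k \<le> (real kstar)\<^sup>2 * exp (- 2) * r0 + 192 * real k * \<sigma> / \<mu>\<^sup>2"
    if k: "kstar \<le> k" "k \<le> Suc kstar" for k
  proof -
    have "(real k)\<^sup>2 * ?r k \<le> (real kstar)\<^sup>2 * exp (- 2) * r0 + (real k)\<^sup>2 * (12 * w\<^sup>2 * \<sigma> / (w * \<mu> / 2))"
      using w mu \<sigma> r0 kstar(2) k by (intro affine_rec_warmup) (auto simp: step_def)
    also have "(real k)\<^sup>2 * (12 * w\<^sup>2 * \<sigma> / (w * \<mu> / 2)) = real k * (w * real k) * (24 * \<sigma> / \<mu>)"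
      using w mu by (simp add: power2_eq_square field_simps)
    also have "\<dots> \<le> real k * (8 / \<mu>) * (24 * \<sigma> / \<mu>)"
    proof -
      have "w * real k \<le> w * (real kstar + 1)"
        using k w by (intro mult_left_mono) auto
      then show ?thesis
        using kstar(3) mu \<sigma> by (intro mult_right_mono mult_left_mono) auto
    qed
    finally show ?thesis by (simp add: power2_eq_square)
  qed
  show ?thesis
  proof (cases "K = kstar")
    case False
    then obtain m where m: "K = Suc kstar + m"
      using K le_Suc_ex by (metis le_neq_implies_less Suc_leI)
    have "(real K)\<^sup>2 * ?r K \<le> (real (Suc kstar))\<^sup>2 * ?r (Suc kstar) + real m * (192 * \<sigma> / \<mu>\<^sup>2)"
      unfolding m
    proof (rule affine_rec_tail)
      fix j assume "Suc kstar \<le> j"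
      then have j: "step j = (2 * real j + 1) / (real j + 1)\<^sup>2 * (2 / \<mu>)"
        by (simp add: step_def)
      show "(real j + 1)\<^sup>2 * (1 - step j * \<mu> / 2) = (real j)\<^sup>2"
        unfolding j by (rule decreasing_step_contraction[OF mu])
      show "(real j + 1)\<^sup>2 * (12 * (step j)\<^sup>2 * \<sigma>) \<le> 192 * \<sigma> / \<mu>\<^sup>2"
        unfolding j by (rule decreasing_step_noise[OF mu \<sigma>])
    qed
    moreover have "192 * real K * \<sigma> / \<mu>\<^sup>2 = 192 * real (Suc kstar) * \<sigma> / \<mu>\<^sup>2 + real m * (192 * \<sigma> / \<mu>\<^sup>2)"
      by (simp add: m algebra_simps add_divide_distrib)
    ultimately show ?thesis
      using warmup[of "Suc kstar"] by linarith
  qed (use warmup[of K] in simp)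
qed

lemma affine_rec_schedule_bound:
  fixes w \<mu> \<sigma> r0 :: real
  assumes mu: "0 < \<mu>" and w: "0 < w" "w * \<mu> \<le> 1/4" and \<sigma>: "0 \<le> \<sigma>" and r0: "0 \<le> r0"
  defines "kstar \<equiv> nat \<lceil>4 / (\<mu> * w)\<rceil>"
  defines "step \<equiv> (\<lambda>k::nat. if k \<le> kstar then w else (2 * real k + 1) / (real k + 1)\<^sup>2 * (2 / \<mu>))"
  assumes K: "kstar \<le> K"
  shows "affine_rec (\<lambda>k. 1 - step k * \<mu> / 2) (\<lambda>k. 12 * (step k)\<^sup>2 * \<sigma>) r0 K
           \<le> (real kstar / real K)\<^sup>2 / exp 2 * r0 + 192 * \<sigma> / (\<mu>\<^sup>2 * real K)"
proof -
  let ?r = "affine_rec (\<lambda>k. 1 - step k * \<mu> / 2) (\<lambda>k. 12 * (step k)\<^sup>2 * \<sigma>) r0"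
  have K_pos: "0 < real K"
    using K warmup_length(1)[OF mu w] unfolding kstar_def by linarith
  have "?r K = (real K)\<^sup>2 * ?r K / (real K)\<^sup>2"
    using K_pos by simp
  also have "\<dots> \<le> ((real kstar)\<^sup>2 * exp (- 2) * r0 + 192 * real K * \<sigma> / \<mu>\<^sup>2) / (real K)\<^sup>2"
    using affine_rec_schedule_sq_bound[OF mu w \<sigma> r0 K[unfolded kstar_def]]
    unfolding kstar_def step_def by (rule divide_right_mono) simp
  also have "\<dots> = (real kstar)\<^sup>2 * exp (- 2) * r0 / (real K)\<^sup>2 + 192 * \<sigma> / (\<mu>\<^sup>2 * real K)"
    using K_pos by (simp add: add_divide_distrib power2_eq_square)
  also have "(real kstar)\<^sup>2 * exp (- 2) * r0 / (real K)\<^sup>2 = (real kstar / real K)\<^sup>2 / exp 2 * r0"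
    by (simp add: power_divide exp_minus field_simps)
  finally show ?thesis .
qed

section \<open>The SPEG iteration\<close>

lemma speg_state_Suc:
  "speg_state Fs \<gamma> \<omega> x0 s (Suc k) =
    (let x = fst (speg_state Fs \<gamma> \<omega> x0 s k);
         xh = x - \<gamma> k *\<^sub>R Fv Fs (s k) (snd (speg_state Fs \<gamma> \<omega> x0 s k))
     in (x - \<omega> k *\<^sub>R Fv Fs (s (Suc k)) xh, xh))"
  by (simp add: Let_def case_prod_unfold)

lemma speg_state_cong:
  "(\<And>i. i \<le> k \<Longrightarrow> s i = s' i) \<Longrightarrow> speg_state Fs \<gamma> \<omega> x0 s k = speg_state Fs \<gamma> \<omega> x0 s' k"
proof (induction k)
  case (Suc k)
  then show ?case by (simp only: speg_state_Suc)
qed simp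

lemma snd_speg_state_cong:
  assumes "\<And>i. i < k \<Longrightarrow> s i = s' i"
  shows "snd (speg_state Fs \<gamma> \<omega> x0 s k) = snd (speg_state Fs \<gamma> \<omega> x0 s' k)"
proof (cases k)
  case (Suc m)
  then have "speg_state Fs \<gamma> \<omega> x0 s m = speg_state Fs \<gamma> \<omega> x0 s' m" "s m = s' m"
    using assms by (auto intro: speg_state_cong)
  then show ?thesis unfolding Suc speg_state_Suc Let_def by simp
qed simp

lemma measurable_Fv:
  assumes "\<And>i. Fs i \<in> borel_measurable borel"
    and "f \<in> borel_measurable M" and "g \<in> borel_measurable M"
  shows "(\<lambda>x. Fv Fs (f x) (g x)) \<in> borel_measurable M"
proof -
  have "(\<lambda>x. f x $ i) \<in> borel_measurable M" "(\<lambda>x. Fs i (g x)) \<in> borel_measurable M" for i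
    using assms by (auto intro: measurable_compose[where g="\<lambda>v. v $ i"] measurable_compose[where g="Fs i"])
  then show ?thesis unfolding Fv_def by measurable
qed

lemma measurable_Fmean:
  "(\<And>i. Fs i \<in> borel_measurable borel) \<Longrightarrow> Fmean Fs \<in> borel_measurable borel"
  unfolding Fmean_def by measurable

lemma measurable_speg_state:
  assumes meas: "\<And>i. Fs i \<in> borel_measurable borel"
    and coord: "\<And>i. (\<lambda>s. s i) \<in> borel_measurable M"
  shows "(\<lambda>s. fst (speg_state Fs \<gamma> \<omega> x0 s k)) \<in> borel_measurable M"
    and "(\<lambda>s. snd (speg_state Fs \<gamma> \<omega> x0 s k)) \<in> borel_measurable M"
proof -
  have "(\<lambda>s. fst (speg_state Fs \<gamma> \<omega> x0 s k)) \<in> borel_measurable M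
      \<and> (\<lambda>s. snd (speg_state Fs \<gamma> \<omega> x0 s k)) \<in> borel_measurable M"
  proof (induction k)
    case (Suc k)
    then have [measurable]: "(\<lambda>s. fst (speg_state Fs \<gamma> \<omega> x0 s k)) \<in> borel_measurable M"
      "(\<lambda>s. snd (speg_state Fs \<gamma> \<omega> x0 s k)) \<in> borel_measurable M" by auto
    note coord[measurable] measurable_Fv[OF meas, measurable]
    show ?case unfolding speg_state_Suc Let_def by simp measurable
  qed simp
  then show "(\<lambda>s. fst (speg_state Fs \<gamma> \<omega> x0 s k)) \<in> borel_measurable M"
    and "(\<lambda>s. snd (speg_state Fs \<gamma> \<omega> x0 s k)) \<in> borel_measurable M" by auto
qed

lemma
  assumes D: "sampling_distribution D"
  shows integrable_inner_Fv: "integrable D (\<lambda>v. inner (Fv Fs v y) u)"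
    and integral_inner_Fv: "(\<integral>v. inner (Fv Fs v y) u \<partial>D) = inner (Fmean Fs y) u"
proof -
  have Fv_eq: "inner (Fv Fs v y) u = (\<Sum>i\<in>UNIV. v $ i * (inner (Fs i y) u / real CARD('a)))" for v
    by (simp add: Fv_def inner_sum_left sum_divide_distrib)
  have "integrable D (\<lambda>v. v $ i)" "(\<integral>v. v $ i \<partial>D) = 1" for i
    using D unfolding sampling_distribution_def by auto
  then show "integrable D (\<lambda>v. inner (Fv Fs v y) u)"
    and "(\<integral>v. inner (Fv Fs v y) u \<partial>D) = inner (Fmean Fs y) u"
    unfolding Fv_eq by (simp_all add: Fmean_def inner_sum_left sum_divide_distrib)
qed

section \<open>The Lyapunov recursion for SPEG\<close>

locale speg_problem =
  fixes Fs :: "'i::finite \<Rightarrow> 'a::euclidean_space \<Rightarrow> 'a"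
    and D :: "(real^'i) measure"
    and xs :: 'a and L \<mu> \<delta> \<sigma>2 :: real
  assumes meas: "\<And>i. Fs i \<in> borel_measurable borel"
    and D: "sampling_distribution D"
    and root: "Fmean Fs xs = 0"
    and lip: "L-lipschitz_on UNIV (Fmean Fs)"
    and mu: "\<mu> > 0" and qsm: "quasi_strongly_monotone \<mu> (Fmean Fs) xs"
    and delta: "\<delta> > 0" and ER: "expected_residual \<delta> D Fs xs"
    and sig_int: "integrable D (\<lambda>v. (norm (Fv Fs v xs))\<^sup>2)"
    and sig: "\<sigma>2 = (\<integral>v. (norm (Fv Fs v xs))\<^sup>2 \<partial>D)"
begin

abbreviation F :: "'a \<Rightarrow> 'a" where "F \<equiv> Fmean Fs"

abbreviation paths :: "(nat \<Rightarrow> real^'i) measure" where "paths \<equiv> PiM UNIV (\<lambda>_. D)"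

sublocale D: prob_space D
  using D unfolding sampling_distribution_def by simp

sublocale paths: product_prob_space "\<lambda>_. D" "UNIV :: nat set" ..

lemma sets_D: "sets D = sets borel"
  using D unfolding sampling_distribution_def by simp

lemma measurable_Fv_sample[measurable]: "(\<lambda>v. Fv Fs v y) \<in> borel_measurable D"
  using measurable_Fv[OF meas, of "\<lambda>v. v" borel "\<lambda>_. y"] by (simp add: measurable_cong_sets[OF sets_D])

lemma measurable_coordinate[measurable]: "(\<lambda>s. s i) \<in> borel_measurable paths"
  using measurable_component_singleton[of i UNIV "\<lambda>_. D"] by (simp add: measurable_cong_sets[OF refl sets_D])

lemma nn_integral_paths_resample:
  "f \<in> borel_measurable paths \<Longrightarrow> (\<integral>\<^sup>+ s. f s \<partial>paths) = (\<integral>\<^sup>+ s. \<integral>\<^sup>+ v. f (s(j := v)) \<partial>D \<partial>paths)"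
  by (rule nn_integral_PiM_resample) (auto simp: D.prob_space_axioms)

lemma sigma_nonneg: "0 \<le> \<sigma>2"
  unfolding sig by simp

lemma mu_le_L: "\<mu> \<le> L"
proof -
  obtain e :: 'a where e: "e \<in> Basis" using nonempty_Basis by blast
  then have "\<mu> = \<mu> * (norm ((xs + e) - xs))\<^sup>2" by simp
  also have "\<dots> \<le> inner (F (xs + e)) ((xs + e) - xs)"
    using qsm unfolding quasi_strongly_monotone_def by blast
  also have "\<dots> \<le> dist (F (xs + e)) (F xs) * dist (xs + e) xs"
    using norm_cauchy_schwarz root by (simp add: dist_norm)
  also have "\<dots> \<le> L * dist (xs + e) xs * dist (xs + e) xs"
    using lipschitz_onD[OF lip] by (simp add: mult_right_mono)
  also have "\<dots> = L" using e by (simp add: dist_norm)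
  finally show ?thesis .
qed

lemma variance_bound:
  shows "(\<integral>\<^sup>+ v. ennreal ((norm (Fv Fs v y - F y))\<^sup>2) \<partial>D) \<le> ennreal (\<delta> * (norm (y - xs))\<^sup>2 + 2 * \<sigma>2)"
    and "integrable D (\<lambda>v. (norm (Fv Fs v y - F y))\<^sup>2)"
proof -
  let ?r = "\<lambda>v. (norm ((Fv Fs v y - Fv Fs v xs) - (F y - F xs)))\<^sup>2"
  let ?q = "\<lambda>v. (norm (Fv Fs v xs))\<^sup>2"
  have split: "(norm (Fv Fs v y - F y))\<^sup>2 \<le> 2 * ?r v + 2 * ?q v" for v
    using power2_norm_add_le[of "(Fv Fs v y - Fv Fs v xs) - (F y - F xs)" "Fv Fs v xs"] root
    by (simp add: algebra_simps)
  have "(\<integral>\<^sup>+ v. ennreal ((norm (Fv Fs v y - F y))\<^sup>2) \<partial>D)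
      \<le> (\<integral>\<^sup>+ v. 2 * ennreal (?r v) + 2 * ennreal (?q v) \<partial>D)"
    using ennreal_leI[OF split] by (intro nn_integral_mono) (simp add: ennreal_plus ennreal_mult)
  also have "\<dots> = 2 * (\<integral>\<^sup>+ v. ennreal (?r v) \<partial>D) + 2 * (\<integral>\<^sup>+ v. ennreal (?q v) \<partial>D)"
    by (simp add: nn_integral_add nn_integral_cmult)
  also have "\<dots> \<le> 2 * ennreal (\<delta> / 2 * (norm (y - xs))\<^sup>2) + 2 * ennreal \<sigma>2"
    using ER sig_int unfolding expected_residual_def sig
    by (intro add_mono mult_left_mono) (auto simp: nn_integral_eq_integral)
  also have "\<dots> = ennreal (2 * (\<delta> / 2 * (norm (y - xs))\<^sup>2)) + ennreal (2 * \<sigma>2)"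
    by (simp only: ennreal_mult'[OF zero_le_numeral] ennreal_numeral)
  also have "\<dots> = ennreal (\<delta> * (norm (y - xs))\<^sup>2 + 2 * \<sigma>2)"
    using delta sigma_nonneg by (subst ennreal_plus[symmetric]) auto
  finally show bound: "(\<integral>\<^sup>+ v. ennreal ((norm (Fv Fs v y - F y))\<^sup>2) \<partial>D) \<le> ennreal (\<delta> * (norm (y - xs))\<^sup>2 + 2 * \<sigma>2)" .
  show "integrable D (\<lambda>v. (norm (Fv Fs v y - F y))\<^sup>2)"
    using bound by (intro integrableI_bounded) (auto simp: top_unique ennreal_less_top intro: le_less_trans)
qed

abbreviation x_iter :: "(nat \<Rightarrow> real) \<Rightarrow> 'a \<Rightarrow> nat \<Rightarrow> (nat \<Rightarrow> real^'i) \<Rightarrow> 'a" where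
  "x_iter stp x0 k s \<equiv> fst (speg_state Fs stp stp x0 s k)"

abbreviation xhat_iter :: "(nat \<Rightarrow> real) \<Rightarrow> 'a \<Rightarrow> nat \<Rightarrow> (nat \<Rightarrow> real^'i) \<Rightarrow> 'a" where
  "xhat_iter stp x0 k s \<equiv> snd (speg_state Fs stp stp x0 s k)"

lemmas measurable_Fv_meas[measurable] = measurable_Fv[OF meas]
  and measurable_F[measurable] = measurable_Fmean[OF meas]

lemma measurable_iterates[measurable]:
  "(\<lambda>s. x_iter stp x0 k s) \<in> borel_measurable paths" "(\<lambda>s. xhat_iter stp x0 k s) \<in> borel_measurable paths"
  using measurable_speg_state[OF meas measurable_coordinate] .

lemma extragradient_lipschitz_estimate:
  assumes w: "0 \<le> w" "w * L \<le> 1/4"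
  shows "2 * (w\<^sup>2 * (norm (F (x - w *\<^sub>R p) - p))\<^sup>2)
    \<le> (norm (x - xh))\<^sup>2 / 2 + w\<^sup>2 * (norm p)\<^sup>2 / 2 + 4 * (w\<^sup>2 * (norm (p - F xh))\<^sup>2)"
proof -
  define y where "y = x - w *\<^sub>R p"
  have L: "0 \<le> L"
    using lip by (rule lipschitz_on_nonneg)
  have wL2: "w\<^sup>2 * L\<^sup>2 \<le> 1/16"
    using power_mono[OF w(2), of 2] w(1) L by (simp add: power_mult_distrib power_divide)
  have "(norm (F y - p))\<^sup>2 \<le> 2 * (norm (F y - F xh))\<^sup>2 + 2 * (norm (p - F xh))\<^sup>2"
    using power2_norm_add_le[of "F y - F xh" "F xh - p"] by (simp add: norm_minus_commute)
  also have "(norm (F y - F xh))\<^sup>2 \<le> L\<^sup>2 * (norm (y - xh))\<^sup>2"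
    using lipschitz_onD[OF lip, of y xh] L by (simp add: dist_norm power_mono flip: power_mult_distrib)
  also have "(norm (y - xh))\<^sup>2 \<le> 2 * (norm (x - xh))\<^sup>2 + 2 * w\<^sup>2 * (norm p)\<^sup>2"
    using power2_norm_add_le[of "x - xh" "- (w *\<^sub>R p)"] by (simp add: y_def power_mult_distrib algebra_simps)
  finally have "2 * (w\<^sup>2 * (norm (F y - p))\<^sup>2)
      \<le> 2 * w\<^sup>2 * (2 * L\<^sup>2 * (2 * (norm (x - xh))\<^sup>2 + 2 * w\<^sup>2 * (norm p)\<^sup>2) + 2 * (norm (p - F xh))\<^sup>2)"
    by (simp add: mult_left_mono)
  also have "\<dots> = 8 * (w\<^sup>2 * L\<^sup>2) * ((norm (x - xh))\<^sup>2 + w\<^sup>2 * (norm p)\<^sup>2) + 4 * (w\<^sup>2 * (norm (p - F xh))\<^sup>2)"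
    by (simp add: algebra_simps)
  also have "\<dots> \<le> 8 * (1/16) * ((norm (x - xh))\<^sup>2 + w\<^sup>2 * (norm p)\<^sup>2) + 4 * (w\<^sup>2 * (norm (p - F xh))\<^sup>2)"
    using wL2 by (intro add_right_mono mult_right_mono mult_left_mono) auto
  finally show ?thesis
    by (simp add: y_def add_divide_distrib)
qed

(* The residual term 2 w^2 delta |y - x*|^2 is absorbed by 1/18 of the monotonicity gain
   2 w mu |y - x*|^2; this is where the factor 17/18 comes from. *)
lemma extragradient_step_estimate:
  fixes x xh p :: 'a and w :: real
  defines "y \<equiv> x - w *\<^sub>R p"
  assumes w: "0 \<le> w" "w * L \<le> 1/4" "18 * \<delta> * w \<le> \<mu>"
  shows "(norm (x - xs))\<^sup>2 - 2 * w * inner (F y) (y - xs) + 2 * w\<^sup>2 * (norm (F y - p))\<^sup>2 - w\<^sup>2 * (norm p)\<^sup>2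
           + 2 * w\<^sup>2 * (\<delta> * (norm (y - xs))\<^sup>2 + 2 * \<sigma>2)
         \<le> (1 - 17/18 * w * \<mu>) * (norm (x - xs))\<^sup>2 + 1/2 * (norm (x - xh))\<^sup>2
           + 4 * w\<^sup>2 * (norm (p - F xh))\<^sup>2 + 4 * w\<^sup>2 * \<sigma>2"
proof -
  define A where "A = (norm (x - xs))\<^sup>2"
  define C where "C = (norm (y - xs))\<^sup>2"
  define P where "P = w\<^sup>2 * (norm p)\<^sup>2"
  define q where "q = w * \<mu>"
  have q: "0 \<le> q" "q \<le> 1/4"
    using w mu mu_le_L mult_left_mono[OF mu_le_L w(1)] by (auto simp: q_def)
  have monotone: "q * C \<le> w * inner (F y) (y - xs)"
    using qsm mult_left_mono[of "\<mu> * C" "inner (F y) (y - xs)" w] w(1)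
    unfolding quasi_strongly_monotone_def C_def q_def by (simp add: mult.assoc)
  have residual: "2 * (w\<^sup>2 * \<delta> * C) \<le> q * C / 9"
    using mult_right_mono[OF mult_left_mono[OF w(3) w(1)], of C]
    by (simp add: C_def q_def power2_eq_square algebra_simps)
  have contraction: "q * A \<le> 2 * (q * C) + P / 2"
    using extrapolation_sq_dist[OF q, of x xs w p] by (simp add: A_def C_def P_def y_def)
  have "P \<ge> 0" by (simp add: P_def)
  moreover have "(norm (x - xs))\<^sup>2 - 2 * w * inner (F y) (y - xs) + 2 * w\<^sup>2 * (norm (F y - p))\<^sup>2
      - w\<^sup>2 * (norm p)\<^sup>2 + 2 * w\<^sup>2 * (\<delta> * (norm (y - xs))\<^sup>2 + 2 * \<sigma>2)
      = A - 2 * (w * inner (F y) (y - xs)) + 2 * (w\<^sup>2 * (norm (F y - p))\<^sup>2) - P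
        + 2 * (w\<^sup>2 * \<delta> * C) + 4 * (w\<^sup>2 * \<sigma>2)"
    by (simp add: A_def P_def C_def algebra_simps)
  moreover have "(1 - 17/18 * w * \<mu>) * (norm (x - xs))\<^sup>2 + 1/2 * (norm (x - xh))\<^sup>2
      + 4 * w\<^sup>2 * (norm (p - F xh))\<^sup>2 + 4 * w\<^sup>2 * \<sigma>2
      = A - 17/18 * (q * A) + (norm (x - xh))\<^sup>2 / 2 + 4 * (w\<^sup>2 * (norm (p - F xh))\<^sup>2) + 4 * (w\<^sup>2 * \<sigma>2)"
    by (simp add: A_def q_def algebra_simps)
  ultimately show ?thesis
    using monotone residual contraction extragradient_lipschitz_estimate[OF w(1,2), of x p xh]
    unfolding P_def y_def by linarith
qed

lemma nn_integral_extragradient_step_le: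
  fixes x xh p :: 'a and w :: real
  defines "y \<equiv> x - w *\<^sub>R p"
  assumes w: "0 \<le> w" "w * L \<le> 1/4" "18 * \<delta> * w \<le> \<mu>"
  shows "(\<integral>\<^sup>+ v. ennreal ((norm (x - w *\<^sub>R Fv Fs v y - xs))\<^sup>2 + (norm (x - w *\<^sub>R Fv Fs v y - y))\<^sup>2) \<partial>D)
    \<le> ennreal ((1 - 17/18 * w * \<mu>) * (norm (x - xs))\<^sup>2 + 1/2 * (norm (x - xh))\<^sup>2
                + 4 * w\<^sup>2 * (norm (p - F xh))\<^sup>2 + 4 * w\<^sup>2 * \<sigma>2)"
proof -
  define e where "e v = Fv Fs v y - F y" for v
  define C0 where "C0 = (norm (x - xs))\<^sup>2 - 2 * w * inner (F y) (y - xs)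
    + 2 * w\<^sup>2 * (norm (F y - p))\<^sup>2 - w\<^sup>2 * (norm p)\<^sup>2"
  let ?R = "\<lambda>v. (norm (x - w *\<^sub>R Fv Fs v y - xs))\<^sup>2 + (norm (x - w *\<^sub>R Fv Fs v y - y))\<^sup>2"
  have R_eq: "?R v = C0 - 2 * w * inner (e v) (y - xs) + 4 * w\<^sup>2 * inner (e v) (F y - p)
      + 2 * w\<^sup>2 * (norm (e v))\<^sup>2" for v
    using extragradient_sq_norm_expand[of x w "F y" "e v" xs p]
    unfolding C0_def y_def e_def by simp
  have centred: "integrable D (\<lambda>v. inner (e v) u)" "(\<integral>v. inner (e v) u \<partial>D) = 0" for u
    using integrable_inner_Fv[OF D, of Fs y u] integral_inner_Fv[OF D, of Fs y u]
    by (auto simp: e_def inner_diff_left D.prob_space)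
  have e_int: "integrable D (\<lambda>v. (norm (e v))\<^sup>2)"
    and e_var: "(\<integral>v. (norm (e v))\<^sup>2 \<partial>D) \<le> \<delta> * (norm (y - xs))\<^sup>2 + 2 * \<sigma>2"
    using variance_bound[of y] delta sigma_nonneg
    by (auto simp: e_def nn_integral_eq_integral simp del: ennreal_plus)
  have "integrable D ?R"
    unfolding R_eq using centred e_int by auto
  then have "(\<integral>\<^sup>+ v. ennreal (?R v) \<partial>D) = ennreal (\<integral>v. ?R v \<partial>D)"
    by (intro nn_integral_eq_integral) auto
  also have "(\<integral>v. ?R v \<partial>D) = C0 + 2 * w\<^sup>2 * (\<integral>v. (norm (e v))\<^sup>2 \<partial>D)"
    unfolding R_eq using centred e_int by (simp add: D.prob_space)
  also have "\<dots> \<le> C0 + 2 * w\<^sup>2 * (\<delta> * (norm (y - xs))\<^sup>2 + 2 * \<sigma>2)"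
    using e_var by (simp add: mult_left_mono)
  also have "\<dots> \<le> (1 - 17/18 * w * \<mu>) * (norm (x - xs))\<^sup>2 + 1/2 * (norm (x - xh))\<^sup>2
                + 4 * w\<^sup>2 * (norm (p - F xh))\<^sup>2 + 4 * w\<^sup>2 * \<sigma>2"
    unfolding C0_def y_def using extragradient_step_estimate[OF w] by simp
  finally show ?thesis by (simp add: ennreal_leI)
qed

(* The fresh sample v_k is the coordinate s (Suc k); x_k and xhat_(k-1) depend on s 0, ..., s k only. *)
lemma nn_integral_fresh_sample_le:
  assumes w: "0 \<le> stp k" "stp k * L \<le> 1/4" "18 * \<delta> * stp k \<le> \<mu>"
  shows "speg_R2 D Fs stp stp x0 xs (Suc k) \<le> (\<integral>\<^sup>+ s. ennreal
      ((1 - 17/18 * stp k * \<mu>) * (norm (x_iter stp x0 k s - xs))\<^sup>2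
       + 1/2 * (norm (x_iter stp x0 k s - xhat_iter stp x0 k s))\<^sup>2
       + 4 * (stp k)\<^sup>2 * (norm (Fv Fs (s k) (xhat_iter stp x0 k s) - F (xhat_iter stp x0 k s)))\<^sup>2
       + 4 * (stp k)\<^sup>2 * \<sigma>2) \<partial>paths)"
proof -
  define X where "X s = x_iter stp x0 k s" for s
  define Y where "Y s = X s - stp k *\<^sub>R Fv Fs (s k) (xhat_iter stp x0 k s)" for s
  have next_state: "speg_state Fs stp stp x0 (s(Suc k := v)) (Suc k) = (X s - stp k *\<^sub>R Fv Fs v (Y s), Y s)"
    for s v
    using speg_state_cong[of k "s(Suc k := v)" s Fs stp stp x0]
    by (simp add: speg_state_Suc Let_def X_def Y_def del: speg_state.simps)
  have "speg_R2 D Fs stp stp x0 xs (Suc k) = (\<integral>\<^sup>+ s. \<integral>\<^sup>+ v. ennreal ((norm (X s - stp k *\<^sub>R Fv Fs v (Y s) - xs))\<^sup>2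
      + (norm (X s - stp k *\<^sub>R Fv Fs v (Y s) - Y s))\<^sup>2) \<partial>D \<partial>paths)"
    unfolding speg_R2_def
    by (subst nn_integral_paths_resample[where j="Suc k"]) (simp_all add: next_state del: speg_state.simps)
  also have "\<dots> \<le> (\<integral>\<^sup>+ s. ennreal
      ((1 - 17/18 * stp k * \<mu>) * (norm (X s - xs))\<^sup>2 + 1/2 * (norm (X s - xhat_iter stp x0 k s))\<^sup>2
       + 4 * (stp k)\<^sup>2 * (norm (Fv Fs (s k) (xhat_iter stp x0 k s) - F (xhat_iter stp x0 k s)))\<^sup>2
       + 4 * (stp k)\<^sup>2 * \<sigma>2) \<partial>paths)"
    unfolding Y_def by (intro nn_integral_mono nn_integral_extragradient_step_le[OF w])
  finally show ?thesis
    unfolding X_def .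
qed

(* xhat_iter stp x0 k s does not depend on s k = v_(k-1), so that sample is fresh for it. *)
lemma nn_integral_previous_sample_le:
  "(\<integral>\<^sup>+ s. ennreal ((norm (Fv Fs (s k) (xhat_iter stp x0 k s) - F (xhat_iter stp x0 k s)))\<^sup>2) \<partial>paths)
    \<le> (\<integral>\<^sup>+ s. ennreal (\<delta> * (2 * (norm (x_iter stp x0 k s - xs))\<^sup>2
          + 2 * (norm (x_iter stp x0 k s - xhat_iter stp x0 k s))\<^sup>2) + 2 * \<sigma>2) \<partial>paths)"
proof -
  let ?X = "x_iter stp x0 k" and ?H = "xhat_iter stp x0 k"
  have H_upd: "?H (s(k := v)) = ?H s" for s v
    by (rule snd_speg_state_cong) simp
  have "(\<lambda>s. ennreal ((norm (Fv Fs (s k) (?H s) - F (?H s)))\<^sup>2)) \<in> borel_measurable paths"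
    by measurable
  then have "(\<integral>\<^sup>+ s. ennreal ((norm (Fv Fs (s k) (?H s) - F (?H s)))\<^sup>2) \<partial>paths)
      = (\<integral>\<^sup>+ s. \<integral>\<^sup>+ v. ennreal ((norm (Fv Fs v (?H s) - F (?H s)))\<^sup>2) \<partial>D \<partial>paths)"
    by (subst nn_integral_paths_resample[where j=k]) (simp_all add: H_upd)
  also have "\<dots> \<le> (\<integral>\<^sup>+ s. ennreal (\<delta> * (norm (?H s - xs))\<^sup>2 + 2 * \<sigma>2) \<partial>paths)"
    by (intro nn_integral_mono variance_bound(1))
  also have "\<dots> \<le> (\<integral>\<^sup>+ s. ennreal (\<delta> * (2 * (norm (?X s - xs))\<^sup>2 + 2 * (norm (?X s - ?H s))\<^sup>2) + 2 * \<sigma>2) \<partial>paths)"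
  proof (intro nn_integral_mono ennreal_leI add_right_mono mult_left_mono)
    fix s
    show "(norm (?H s - xs))\<^sup>2 \<le> 2 * (norm (?X s - xs))\<^sup>2 + 2 * (norm (?X s - ?H s))\<^sup>2"
      using power2_norm_add_le[of "?X s - xs" "?H s - ?X s"] by (simp add: norm_minus_commute)
  qed (use delta in simp)
  finally show ?thesis .
qed

lemma speg_R2_Suc_le:
  assumes w: "0 \<le> stp k" "stp k * L \<le> 1/4" "18 * \<delta> * stp k \<le> \<mu>"
  shows "speg_R2 D Fs stp stp x0 xs (Suc k)
     \<le> ennreal (1 - stp k * \<mu> / 2) * speg_R2 D Fs stp stp x0 xs k + ennreal (12 * (stp k)\<^sup>2 * \<sigma>2)"
proof -
  define w where "w = stp k"
  define a where "a s = (norm (x_iter stp x0 k s - xs))\<^sup>2" for s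
  define b where "b s = (norm (x_iter stp x0 k s - xhat_iter stp x0 k s))\<^sup>2" for s
  define N where "N s = (norm (Fv Fs (s k) (xhat_iter stp x0 k s) - F (xhat_iter stp x0 k s)))\<^sup>2" for s
  define T where "T s = (1 - 17/18 * w * \<mu>) * a s + b s / 2 + 4 * w\<^sup>2 * \<sigma>2" for s
  define M where "M s = \<delta> * (2 * a s + 2 * b s) + 2 * \<sigma>2" for s
  have wmu: "w * \<mu> \<le> 1/4"
    using w mu_le_L mult_left_mono[OF mu_le_L w(1)] by (simp add: w_def)
  have [measurable]: "a \<in> borel_measurable paths" "b \<in> borel_measurable paths" "N \<in> borel_measurable paths"
    "T \<in> borel_measurable paths" "M \<in> borel_measurable paths"
    unfolding a_def b_def N_def T_def M_def by measurable
  have nonneg: "0 \<le> a s" "0 \<le> b s" "0 \<le> N s" "0 \<le> T s" "0 \<le> M s" for s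
    using wmu mu sigma_nonneg delta
    by (auto simp: T_def M_def a_def b_def N_def intro!: add_nonneg_nonneg mult_nonneg_nonneg)
  have "speg_R2 D Fs stp stp x0 xs (Suc k) \<le> (\<integral>\<^sup>+ s. ennreal (T s + 4 * w\<^sup>2 * N s) \<partial>paths)"
    using nn_integral_fresh_sample_le[of stp k x0, OF w] by (simp add: T_def N_def a_def b_def w_def add_ac)
  also have "\<dots> = (\<integral>\<^sup>+ s. ennreal (T s) \<partial>paths) + ennreal (4 * w\<^sup>2) * (\<integral>\<^sup>+ s. ennreal (N s) \<partial>paths)"
    using nonneg by (intro nn_integral_ennreal_add_cmult) auto
  also have "\<dots> \<le> (\<integral>\<^sup>+ s. ennreal (T s) \<partial>paths) + ennreal (4 * w\<^sup>2) * (\<integral>\<^sup>+ s. ennreal (M s) \<partial>paths)"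
    using nn_integral_previous_sample_le[of k stp x0]
    unfolding N_def M_def a_def b_def by (intro add_left_mono mult_left_mono) auto
  also have "\<dots> = (\<integral>\<^sup>+ s. ennreal (T s + 4 * w\<^sup>2 * M s) \<partial>paths)"
    using nonneg by (intro nn_integral_ennreal_add_cmult[symmetric]) auto
  also have "\<dots> \<le> (\<integral>\<^sup>+ s. ennreal (12 * w\<^sup>2 * \<sigma>2 + (1 - w * \<mu> / 2) * (a s + b s)) \<partial>paths)"
    using lyapunov_recombination[OF nonneg(1,2) w(1)[folded w_def] w(3)[folded w_def] wmu]
    by (intro nn_integral_mono ennreal_leI) (simp add: T_def M_def add.commute)
  also have "\<dots> = ennreal (12 * w\<^sup>2 * \<sigma>2) + ennreal (1 - w * \<mu> / 2) * speg_R2 D Fs stp stp x0 xs k"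
    using wmu sigma_nonneg nonneg
    by (subst nn_integral_ennreal_add_cmult) (auto simp: speg_R2_def a_def b_def paths.emeasure_space_1)
  finally show ?thesis
    by (simp add: w_def add.commute)
qed

lemma speg_R2_0: "speg_R2 D Fs stp stp x0 xs 0 = ennreal ((norm (x0 - xs))\<^sup>2)"
  by (simp add: speg_R2_def paths.emeasure_space_1)

lemma speg_R2_le_affine_rec:
  assumes stp: "\<And>k. 0 \<le> stp k" "\<And>k. stp k \<le> min (1 / (4 * L)) (\<mu> / (18 * \<delta>))"
  shows "speg_R2 D Fs stp stp x0 xs K
    \<le> ennreal (affine_rec (\<lambda>k. 1 - stp k * \<mu> / 2) (\<lambda>k. 12 * (stp k)\<^sup>2 * \<sigma>2) ((norm (x0 - xs))\<^sup>2) K)"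
proof (rule le_affine_rec)
  fix k
  have L: "0 < L"
    using mu mu_le_L by simp
  then have "stp k * L \<le> 1/4" "18 * \<delta> * stp k \<le> \<mu>"
    using stp(2)[of k] delta by (simp_all add: field_simps)
  moreover have "stp k * \<mu> \<le> stp k * L"
    using mu_le_L stp(1) by (rule mult_left_mono)
  ultimately show "speg_R2 D Fs stp stp x0 xs (Suc k)
      \<le> ennreal (1 - stp k * \<mu> / 2) * speg_R2 D Fs stp stp x0 xs k + ennreal (12 * (stp k)\<^sup>2 * \<sigma>2)"
    and "0 \<le> 1 - stp k * \<mu> / 2"
    using stp(1) by (auto intro: speg_R2_Suc_le)
qed (simp_all add: speg_R2_0 sigma_nonneg)

lemma min_step_bounds:
  "0 < min (1 / (4 * L)) (\<mu> / (18 * \<delta>))" "min (1 / (4 * L)) (\<mu> / (18 * \<delta>)) * \<mu> \<le> 1/4"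
proof -
  have L: "0 < L"
    using mu mu_le_L by simp
  then show "0 < min (1 / (4 * L)) (\<mu> / (18 * \<delta>))"
    using mu delta by simp
  have "min (1 / (4 * L)) (\<mu> / (18 * \<delta>)) * \<mu> \<le> 1 / (4 * L) * L"
    using mu mu_le_L L by (intro mult_mono) auto
  then show "min (1 / (4 * L)) (\<mu> / (18 * \<delta>)) * \<mu> \<le> 1/4"
    using L by simp
qed

end

theorem theorem4p3:
  fixes Fs :: "'i::finite \<Rightarrow> 'a::euclidean_space \<Rightarrow> 'a"
    and D :: "(real^'i) measure"
    and xs x0 :: 'a and L \<mu> \<delta> \<sigma>2 :: real
  assumes meas: "\<And>i. Fs i \<in> borel_measurable borel"
    and D: "sampling_distribution D"
    and root: "Fmean Fs xs = 0"
    and lip: "L-lipschitz_on UNIV (Fmean Fs)"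
    and mu: "\<mu> > 0" and qsm: "quasi_strongly_monotone \<mu> (Fmean Fs) xs"
    and delta: "\<delta> > 0" and ER: "expected_residual \<delta> D Fs xs"
    and sig_int: "integrable D (\<lambda>v. (norm (Fv Fs v xs))\<^sup>2)"
    and sig: "\<sigma>2 = (\<integral>v. (norm (Fv Fs v xs))\<^sup>2 \<partial>D)"
  defines "wbar \<equiv> min (1 / (4 * L)) (\<mu> / (18 * \<delta>))"
  defines "kstar \<equiv> nat \<lceil>4 / (\<mu> * wbar)\<rceil>"
  defines "step \<equiv> (\<lambda>k::nat. if k \<le> kstar then wbar
                    else (2 * real k + 1) / (real k + 1)\<^sup>2 * (2 / \<mu>))"
  assumes K: "K \<ge> kstar"
  shows "speg_R2 D Fs step step x0 xs K
           \<le> ennreal ((real kstar / real K)\<^sup>2 / exp 2) * speg_R2 D Fs step step x0 xs 0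
             + ennreal (192 * \<sigma>2 / (\<mu>\<^sup>2 * real K))"
proof -
  interpret speg_problem Fs D xs L \<mu> \<delta> \<sigma>2
    by (rule speg_problem.intro) fact+
  note wbar = min_step_bounds[folded wbar_def]
  have step: "0 \<le> step k" "step k \<le> wbar" for k
    using schedule_step_bounds[OF mu wbar(1), of k] unfolding step_def kstar_def by simp_all
  let ?r0 = "(norm (x0 - xs))\<^sup>2"
  have "speg_R2 D Fs step step x0 xs K
      \<le> ennreal (affine_rec (\<lambda>k. 1 - step k * \<mu> / 2) (\<lambda>k. 12 * (step k)\<^sup>2 * \<sigma>2) ?r0 K)"
    using step by (intro speg_R2_le_affine_rec) (simp_all add: wbar_def)
  also have "\<dots> \<le> ennreal ((real kstar / real K)\<^sup>2 / exp 2 * ?r0 + 192 * \<sigma>2 / (\<mu>\<^sup>2 * real K))"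
    using affine_rec_schedule_bound[OF mu wbar sigma_nonneg zero_le_power2 K[unfolded kstar_def]]
    unfolding kstar_def step_def by (rule ennreal_leI)
  also have "\<dots> = ennreal ((real kstar / real K)\<^sup>2 / exp 2) * speg_R2 D Fs step step x0 xs 0
      + ennreal (192 * \<sigma>2 / (\<mu>\<^sup>2 * real K))"
    using mu sigma_nonneg by (simp add: speg_R2_0 ennreal_plus flip: ennreal_mult)
  finally show ?thesis .
qed

end
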